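(* Let $u,v\in E^0$. Then $(F_u,\phi_u)\cong(F_v,\phi_v)$ as extended representation graphs if and only if $u=v$.
   Context: $E=(E^0,E^1,s,r)$ is a row-finite directed graph; a vertex is regular if it emits an edge; for each regular $v$ a fixed edge $e^v\in s^{-1}(v)$ is called special, others nonspecial. The double graph $E_d$ has vertices $E^0$ and edges $e$ (real) and $e^*$ (ghost) for $e\in E^1$, with $s_d(e)=s(e),r_d(e)=r(e),s_d(e^* )=r(e),r_d(e^* )=s(e)$. Paths of length $0$ are vertices. For a path $p=e_1\dots e_n$ set $p^*=e_n^*\dots e_1^*$. The set $X$ of basis paths consists of the paths in $E_d$: vertices; $p,p^*$ for paths $p$ of length $\ge1$ in $E$; $pq^*$ with $p=e_1\dots e_k,q=f_1\dots f_n$ of length $\ge1$ in $E$, $r(p)=r(q)$, and $e_k\ne f_n$ or $e_k=f_n$ nonspecial. $X_v=\{x\in X: s_d(x)=v\}$. An extended representation graph for $E$ is a pair $(F,\phi)$, $F$ a directed graph, $\phi:F\to E_d$ a graph homomorphism, such that for every $w\in F^0$: (i) $w$ is a source or receives exactly one edge $f_w$; (ii) if $w$ is a source or $\phi(f_w)$ is a nonspecial real edge, $\phi$ maps $s^{-1}(w)$ bijectively onto $s_d^{-1}(\phi(w))$; (iii) if $\phi(f_w)$ is a special real edge, onto $s_d^{-1}(\phi(w))\setminus\{\phi(f_w)^*\}$; (iv) if $\phi(f_w)$ is a ghost edge, onto the ghost edges in $s_d^{-1}(\phi(w))$. An isomorphism $(F,\phi)\to(G,\psi)$ is a graph isomorphism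 $\alpha$ with $\psi\circ\alpha=\phi$. $(F_v,\phi_v)$ for $v\in E^0$: vertices $w_x$ ($x\in X_v$), edges $f_x$ ($x\in X_v\setminus\{v\}$) from $w_{x'}$ to $w_x$ where $x'$ is $x$ with its last edge removed ($x'=v$ if $|x|=1$); $\phi_v(w_x)=r_d(x)$, $\phi_v(f_x)=$ last edge of $x$. It is an extended representation graph. *)

theory Defs
  imports Main
begin

record ('v, 'e) dgraph =
  verts :: "'v set"
  edges :: "'e set"
  src   :: "'e \<Rightarrow> 'v"
  rng   :: "'e \<Rightarrow> 'v"

definition wf_graph :: "('v, 'e) dgraph \<Rightarrow> bool" where
  "wf_graph E \<longleftrightarrow> (\<forall>e\<in>edges E. src E e \<in> verts E \<and> rng E e \<in> verts E)"

definition row_finite :: "('v, 'e) dgraph \<Rightarrow> bool" where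
  "row_finite E \<longleftrightarrow> wf_graph E \<and> (\<forall>v\<in>verts E. finite {e\<in>edges E. src E e = v})"

definition regular :: "('v, 'e) dgraph \<Rightarrow> 'v \<Rightarrow> bool" where
  "regular E v \<longleftrightarrow> v \<in> verts E \<and> (\<exists>e\<in>edges E. src E e = v)"

definition special_choice :: "('v, 'e) dgraph \<Rightarrow> ('v \<Rightarrow> 'e) \<Rightarrow> bool" where
  "special_choice E sp \<longleftrightarrow> (\<forall>v. regular E v \<longrightarrow> sp v \<in> edges E \<and> src E (sp v) = v)"

definition special_edge :: "('v, 'e) dgraph \<Rightarrow> ('v \<Rightarrow> 'e) \<Rightarrow> 'e \<Rightarrow> bool" where
  "special_edge E sp e \<longleftrightarrow> e = sp (src E e)"

datatype 'e dedge = Real 'e | Ghost 'e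

fun src_d :: "('v, 'e) dgraph \<Rightarrow> 'e dedge \<Rightarrow> 'v" where
  "src_d E (Real e) = src E e"
| "src_d E (Ghost e) = rng E e"

fun rng_d :: "('v, 'e) dgraph \<Rightarrow> 'e dedge \<Rightarrow> 'v" where
  "rng_d E (Real e) = rng E e"
| "rng_d E (Ghost e) = src E e"

definition double_graph :: "('v, 'e) dgraph \<Rightarrow> ('v, 'e dedge) dgraph" where
  "double_graph E = \<lparr> verts = verts E, edges = Real ` edges E \<union> Ghost ` edges E,
                      src = src_d E, rng = rng_d E \<rparr>"

definition epath :: "('v, 'e) dgraph \<Rightarrow> 'e list \<Rightarrow> bool" where
  "epath E p \<longleftrightarrow> p \<noteq> [] \<and> set p \<subseteq> edges E \<and>
     (\<forall>i. Suc i < length p \<longrightarrow> rng E (p ! i) = src E (p ! Suc i))"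

text \<open>A path in E_d is represented as a pair (source vertex, list of edges of E_d);
  length-0 paths are vertices (v, []).  For a path p, p^* = rev (map Ghost p).\<close>
type_synonym ('v, 'e) dpath = "'v \<times> 'e dedge list"

definition basis_paths :: "('v, 'e) dgraph \<Rightarrow> ('v \<Rightarrow> 'e) \<Rightarrow> ('v, 'e) dpath set" where
  "basis_paths E sp =
     {(v, []) | v. v \<in> verts E}
   \<union> {(src E (hd p), map Real p) | p. epath E p}
   \<union> {(rng E (last p), rev (map Ghost p)) | p. epath E p}
   \<union> {(src E (hd p), map Real p @ rev (map Ghost q)) | p q.
        epath E p \<and> epath E q \<and> rng E (last p) = rng E (last q) \<and>
        (last p \<noteq> last q \<or> \<not> special_edge E sp (last p))}"

definition basis_paths_from :: "('v, 'e) dgraph \<Rightarrow> ('v \<Rightarrow> 'e) \<Rightarrow> 'v \<Rightarrow> ('v, 'e) dpath set" where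
  "basis_paths_from E sp v = {x \<in> basis_paths E sp. fst x = v}"

definition path_rng :: "('v, 'e) dgraph \<Rightarrow> ('v, 'e) dpath \<Rightarrow> 'v" where
  "path_rng E x = (if snd x = [] then fst x else rng_d E (last (snd x)))"

definition path_prefix :: "('v, 'e) dpath \<Rightarrow> ('v, 'e) dpath" where
  "path_prefix x = (fst x, butlast (snd x))"

text \<open>The graph F_v: vertex w_x is represented by x \<in> X_v, edge f_x by x \<in> X_v - {v}.\<close>
definition F_graph :: "('v, 'e) dgraph \<Rightarrow> ('v \<Rightarrow> 'e) \<Rightarrow> 'v \<Rightarrow> (('v,'e) dpath, ('v,'e) dpath) dgraph" where
  "F_graph E sp v = \<lparr> verts = basis_paths_from E sp v,
                       edges = basis_paths_from E sp v - {(v, [])},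
                       src = path_prefix, rng = (\<lambda>x. x) \<rparr>"

definition phi_verts :: "('v, 'e) dgraph \<Rightarrow> ('v, 'e) dpath \<Rightarrow> 'v" where
  "phi_verts E x = path_rng E x"

definition phi_edges :: "('v, 'e) dpath \<Rightarrow> 'e dedge" where
  "phi_edges x = last (snd x)"

definition ext_rep_iso ::
  "('a, 'b) dgraph \<Rightarrow> ('a \<Rightarrow> 'v) \<Rightarrow> ('b \<Rightarrow> 'd) \<Rightarrow>
   ('c, 'f) dgraph \<Rightarrow> ('c \<Rightarrow> 'v) \<Rightarrow> ('f \<Rightarrow> 'd) \<Rightarrow> bool" where
  "ext_rep_iso F phiV phiE G psiV psiE \<longleftrightarrow>
     (\<exists>aV aE. bij_betw aV (verts F) (verts G) \<and> bij_betw aE (edges F) (edges G) \<and>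
        (\<forall>f\<in>edges F. src G (aE f) = aV (src F f) \<and> rng G (aE f) = aV (rng F f)) \<and>
        (\<forall>w\<in>verts F. psiV (aV w) = phiV w) \<and>
        (\<forall>f\<in>edges F. psiE (aE f) = phiE f))"

end

theory Submission
  imports Defs
begin

text \<open>An isomorphism over \<open>E\<^sub>d\<close> carries sources to sources without changing their labels.
  The only source of \<open>F\<^sub>v\<close> is its root \<open>w\<^sub>v\<close>, labelled \<open>v\<close>, because every other vertex
  \<open>w\<^sub>x\<close> receives the edge \<open>f\<^sub>x\<close>. Hence \<open>F\<^sub>u \<cong> F\<^sub>v\<close> forces \<open>u = v\<close>.\<close>

definition sources :: "('a, 'b) dgraph \<Rightarrow> 'a set" where
  "sources F = {w \<in> verts F. \<forall>f\<in>edges F. rng F f \<noteq> w}"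

lemma ext_rep_iso_refl: "ext_rep_iso F phiV phiE F phiV phiE"
  unfolding ext_rep_iso_def by (rule exI[of _ id], rule exI[of _ id]) auto

lemma ext_rep_iso_sources:
  assumes iso: "ext_rep_iso F phiV phiE G psiV psiE"
    and rng_F: "\<forall>f\<in>edges F. rng F f \<in> verts F"
    and w: "w \<in> sources F"
  obtains w' where "w' \<in> sources G" and "psiV w' = phiV w"
proof -
  obtain aV aE where
    bij_V: "bij_betw aV (verts F) (verts G)" and
    bij_E: "bij_betw aE (edges F) (edges G)" and
    hom: "\<forall>f\<in>edges F. rng G (aE f) = aV (rng F f)" and
    label: "\<forall>w\<in>verts F. psiV (aV w) = phiV w"
    using iso unfolding ext_rep_iso_def by blast
  have w_vert: "w \<in> verts F" and w_no_in: "\<forall>f\<in>edges F. rng F f \<noteq> w"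
    using w unfolding sources_def by auto
  have "aV w \<in> sources G"
    unfolding sources_def
  proof (intro CollectI conjI ballI)
    show "aV w \<in> verts G"
      using bij_V w_vert by (auto simp: bij_betw_def)
  next
    fix g assume "g \<in> edges G"
    then obtain f where f: "f \<in> edges F" and g: "g = aE f"
      using bij_E by (auto simp: bij_betw_def)
    have "aV (rng F f) \<noteq> aV w"
      using bij_V rng_F f w_vert w_no_in by (auto simp: bij_betw_def inj_on_def)
    then show "rng G g \<noteq> aV w"
      using hom f g by simp
  qed
  moreover have "psiV (aV w) = phiV w"
    using label w_vert by blast
  ultimately show thesis
    using that by blast
qed

lemma root_in_basis_paths_from:
  "v \<in> verts E \<Longrightarrow> (v, []) \<in> basis_paths_from E sp v"
  unfolding basis_paths_from_def basis_paths_def by auto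

lemma sources_F_graph:
  assumes "v \<in> verts E"
  shows "sources (F_graph E sp v) = {(v, [])}"
  using root_in_basis_paths_from[OF assms]
  unfolding sources_def F_graph_def by auto

lemma phi_verts_root [simp]: "phi_verts E (v, []) = v"
  by (simp add: phi_verts_def path_rng_def)

theorem proposition5p4:
  fixes E :: "('v, 'e) dgraph" and sp :: "'v \<Rightarrow> 'e" and u v :: 'v
  assumes "row_finite E" and "special_choice E sp"
    and "u \<in> verts E" and "v \<in> verts E"
  shows "ext_rep_iso (F_graph E sp u) (phi_verts E) phi_edges
                     (F_graph E sp v) (phi_verts E) phi_edges \<longleftrightarrow> u = v"
proof
  assume iso: "ext_rep_iso (F_graph E sp u) (phi_verts E) phi_edges
                     (F_graph E sp v) (phi_verts E) phi_edges"
  have rng_F: "\<forall>f\<in>edges (F_graph E sp u). rng (F_graph E sp u) f \<in> verts (F_graph E sp u)"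
    by (simp add: F_graph_def)
  have root: "(u, []) \<in> sources (F_graph E sp u)"
    using sources_F_graph[OF \<open>u \<in> verts E\<close>] by simp
  obtain w' where "w' \<in> sources (F_graph E sp v)"
    and "phi_verts E w' = phi_verts E (u, [])"
    by (rule ext_rep_iso_sources[OF iso rng_F root])
  then show "u = v"
    using sources_F_graph[OF \<open>v \<in> verts E\<close>] by simp
next
  assume "u = v"
  then show "ext_rep_iso (F_graph E sp u) (phi_verts E) phi_edges
                     (F_graph E sp v) (phi_verts E) phi_edges"
    by (simp add: ext_rep_iso_refl)
qed

end
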